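(* Let $G$ be a connected graph on $n\ge2$ vertices, $\alpha\in\mathbb{R}$, with vertices labeled so that, writing $s_k=({}^\alpha\mathbb{M})_k+\mathbb{D}_k$, we have $s_1\ge s_2\ge\cdots\ge s_n$. Let $M=\max_{1\le i\le n}\mathbb{D}_i$ and $N=\max_{1\le i\ne j\le n}d_{ij}\mathbb{D}_j^\alpha/\mathbb{D}_i^\alpha$. Then for $1\le i\le n$, \[\rho(\mathbb{DQ}(G))\le \frac{s_i+M-N+\sqrt{(s_i-M+N)^2+4N\sum_{k=1}^{i-1}(s_k-s_i)}}{2}.\] Equality holds if and only if $s_1=\cdots=s_n$, or for some $2\le t\le i$: (i) $\mathbb{D}_k=M$ for $1\le k\le t-1$; (ii) $d_{kl}\mathbb{D}_l^\alpha/\mathbb{D}_k^\alpha=N$ for all $1\le k\le n$, $1\le l\le t-1$, $k\ne l$; (iii) $s_t=\cdots=s_n$.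
   Context: $\mathbb{D}(G)=(d_{ij})$ is the distance matrix of $G$, $\mathbb{D}_i=\sum_j d_{ij}$ the transmission of $v_i$, and $\mathbb{DQ}(G)=\mathrm{diag}(\mathbb{D}_1,\dots,\mathbb{D}_n)+\mathbb{D}(G)$ the distance signless Laplacian matrix. $({}^\alpha\mathbb{M})_i=\frac{\sum_{j=1}^n d_{ij}\mathbb{D}_j^\alpha}{\mathbb{D}_i^\alpha}$ is the generalized average transmission. $\rho$ is the spectral radius. An empty sum equals $0$. *)

theory Defs
  imports Complex_Main "Jordan_Normal_Form.Spectral_Radius"
begin

definition is_walk :: "(nat \<Rightarrow> nat \<Rightarrow> bool) \<Rightarrow> nat \<Rightarrow> nat \<Rightarrow> nat \<Rightarrow> nat \<Rightarrow> bool" where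
  "is_walk E n u v k \<longleftrightarrow> (\<exists>p :: nat \<Rightarrow> nat. p 0 = u \<and> p k = v \<and> (\<forall>m\<le>k. p m < n)
       \<and> (\<forall>m<k. E (p m) (p (Suc m))))"

definition simple_graph :: "nat \<Rightarrow> (nat \<Rightarrow> nat \<Rightarrow> bool) \<Rightarrow> bool" where
  "simple_graph n E \<longleftrightarrow> (\<forall>u v. E u v \<longrightarrow> u < n \<and> v < n) \<and> (\<forall>u v. E u v \<longrightarrow> E v u)
       \<and> (\<forall>u. \<not> E u u)"

definition connected_graph :: "nat \<Rightarrow> (nat \<Rightarrow> nat \<Rightarrow> bool) \<Rightarrow> bool" where
  "connected_graph n E \<longleftrightarrow> simple_graph n E \<and> (\<forall>u<n. \<forall>v<n. \<exists>k. is_walk E n u v k)"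

definition gdist :: "nat \<Rightarrow> (nat \<Rightarrow> nat \<Rightarrow> bool) \<Rightarrow> nat \<Rightarrow> nat \<Rightarrow> real" where
  "gdist n E u v = real (LEAST k. is_walk E n u v k)"

definition transmission :: "nat \<Rightarrow> (nat \<Rightarrow> nat \<Rightarrow> bool) \<Rightarrow> nat \<Rightarrow> real" where
  "transmission n E i = (\<Sum>j<n. gdist n E i j)"

definition DQ_mat :: "nat \<Rightarrow> (nat \<Rightarrow> nat \<Rightarrow> bool) \<Rightarrow> complex mat" where
  "DQ_mat n E = mat n n (\<lambda>(i,j). complex_of_real
      ((if i = j then transmission n E i else 0) + gdist n E i j))"

definition gen_avg_trans :: "nat \<Rightarrow> (nat \<Rightarrow> nat \<Rightarrow> bool) \<Rightarrow> real \<Rightarrow> nat \<Rightarrow> real" where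
  "gen_avg_trans n E \<alpha> i =
     (\<Sum>j<n. gdist n E i j * transmission n E j powr \<alpha>) / transmission n E i powr \<alpha>"

end

theory Submission
  imports Defs
begin

text \<open>With P = diag(D_k^\<alpha>), the matrix B = P^-1 DQ(G) P has the same spectrum as DQ(G), row sums
  s_k, diagonal entries D_k \<le> M and positive off-diagonal entries d_kl D_l^\<alpha>/D_k^\<alpha> \<le> N.
  For a nonnegative matrix with positive off-diagonal part, a positive vector x with Bx \<le> \<beta>x
  bounds the spectral radius by \<beta>, with equality iff Bx = \<beta>x (Collatz--Wielandt).
  Let \<beta> be the larger root of (\<beta> - s_i)(\<beta> - M + N) = N \<Sum>_{k<i} (s_k - s_i) and take
  x_k = 1 + (s_k - s_i)/(\<beta> - M + N) for k < i, x_k = 1 otherwise. Then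
  (Bx)_k \<le> s_k + N \<Sum>_l (x_l - 1) + (M - N)(x_k - 1) \<le> \<beta> x_k, and the equality cases are exactly
  the cases in which both estimates are tight in every row. If all s_k with k \<le> i coincide, x is
  the all-ones vector and the bound reduces to the largest row sum.\<close>

section \<open>Real matrices and diagonal similarity\<close>

definition real_mat :: "nat \<Rightarrow> (nat \<Rightarrow> nat \<Rightarrow> real) \<Rightarrow> complex mat" where
  "real_mat n A = mat n n (\<lambda>(k, l). complex_of_real (A k l))"

lemma real_mat_carrier: "real_mat n A \<in> carrier_mat n n"
  unfolding real_mat_def by simp

lemma mult_real_mat_vec_nth:
  assumes "v \<in> carrier_vec n" and "k < n"
  shows "(real_mat n A *\<^sub>v v) $ k = (\<Sum>l<n. complex_of_real (A k l) * v $ l)"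
  using assms unfolding real_mat_def
  by (auto simp: mult_mat_vec_def scalar_prod_def lessThan_atLeast0 intro!: sum.cong)

lemma eigenvector_real_mat_nth:
  assumes "eigenvector (real_mat n A) v \<mu>" and "k < n"
  shows "(\<Sum>l<n. complex_of_real (A k l) * v $ l) = \<mu> * v $ k"
proof -
  from assms(1) have v: "v \<in> carrier_vec n" and "real_mat n A *\<^sub>v v = \<mu> \<cdot>\<^sub>v v"
    unfolding eigenvector_def real_mat_def by auto
  hence "(real_mat n A *\<^sub>v v) $ k = \<mu> * v $ k" using assms(2) by simp
  thus ?thesis using mult_real_mat_vec_nth[OF v assms(2)] by simp
qed

lemma eigenvalue_real_mat_of_eigen_rows:
  assumes "n > 0" and "\<And>k. k < n \<Longrightarrow> w k \<noteq> 0"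
    and rows: "\<And>k. k < n \<Longrightarrow> (\<Sum>l<n. A k l * w l) = c * w k"
  shows "eigenvalue (real_mat n A) (complex_of_real c)"
proof -
  let ?w = "vec n (\<lambda>l. complex_of_real (w l))"
  have "?w $ 0 \<noteq> 0" using assms(1,2) by simp
  hence "?w \<noteq> 0\<^sub>v n" using assms(1) by (metis index_zero_vec(1))
  moreover have "real_mat n A *\<^sub>v ?w = complex_of_real c \<cdot>\<^sub>v ?w"
  proof (rule eq_vecI)
    fix k assume "k < dim_vec (complex_of_real c \<cdot>\<^sub>v ?w)"
    hence k: "k < n" by simp
    have "(real_mat n A *\<^sub>v ?w) $ k = complex_of_real (\<Sum>l<n. A k l * w l)"
      using k by (simp add: mult_real_mat_vec_nth)
    thus "(real_mat n A *\<^sub>v ?w) $ k = (complex_of_real c \<cdot>\<^sub>v ?w) $ k"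
      using k rows[OF k] by simp
  qed (simp add: real_mat_def)
  ultimately show ?thesis
    unfolding eigenvalue_def eigenvector_def by (intro exI[of _ ?w]) (auto simp: real_mat_def)
qed

lemma eigenvalue_real_mat_diagonal_scaling:
  assumes p: "\<And>k. k < n \<Longrightarrow> p k \<noteq> 0" and ev: "eigenvalue (real_mat n A) \<mu>"
  shows "eigenvalue (real_mat n (\<lambda>k l. A k l * p l / p k)) \<mu>"
proof -
  from ev obtain v where evv: "eigenvector (real_mat n A) v \<mu>" unfolding eigenvalue_def by blast
  hence v: "v \<in> carrier_vec n" and v0: "v \<noteq> 0\<^sub>v n" unfolding eigenvector_def real_mat_def by auto
  let ?u = "vec n (\<lambda>l. v $ l / complex_of_real (p l))"
  have "?u \<noteq> 0\<^sub>v n"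
  proof
    assume u0: "?u = 0\<^sub>v n"
    have "v = 0\<^sub>v n"
    proof (rule eq_vecI)
      fix l assume "l < dim_vec (0\<^sub>v n)"
      hence l: "l < n" by simp
      have "?u $ l = 0" using u0 l by simp
      thus "v $ l = 0\<^sub>v n $ l" using l p[OF l] by simp
    qed (use v in simp)
    thus False using v0 by contradiction
  qed
  moreover have "real_mat n (\<lambda>k l. A k l * p l / p k) *\<^sub>v ?u = \<mu> \<cdot>\<^sub>v ?u"
  proof (rule eq_vecI)
    fix k assume "k < dim_vec (\<mu> \<cdot>\<^sub>v ?u)"
    hence k: "k < n" by simp
    have "(real_mat n (\<lambda>k l. A k l * p l / p k) *\<^sub>v ?u) $ k
        = (\<Sum>l<n. complex_of_real (A k l) * v $ l) / complex_of_real (p k)"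
      using k p by (simp add: mult_real_mat_vec_nth sum_divide_distrib)
    also have "\<dots> = (\<mu> \<cdot>\<^sub>v ?u) $ k"
      using k by (simp add: eigenvector_real_mat_nth[OF evv k])
    finally show "(real_mat n (\<lambda>k l. A k l * p l / p k) *\<^sub>v ?u) $ k = (\<mu> \<cdot>\<^sub>v ?u) $ k" .
  qed (simp add: real_mat_def)
  ultimately show ?thesis
    unfolding eigenvalue_def eigenvector_def by (intro exI[of _ ?u]) (auto simp: real_mat_def)
qed

lemma real_mat_cong:
  assumes "\<And>k l. k < n \<Longrightarrow> l < n \<Longrightarrow> A k l = A' k l"
  shows "real_mat n A = real_mat n A'"
  using assms unfolding real_mat_def by (intro eq_matI) auto

lemma spectrum_real_mat_diagonal_scaling:
  assumes p: "\<And>k. k < n \<Longrightarrow> p k \<noteq> 0"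
  shows "spectrum (real_mat n (\<lambda>k l. A k l * p l / p k)) = spectrum (real_mat n A)"
proof -
  have "real_mat n (\<lambda>k l. A k l * p l / p k * (1 / p l) / (1 / p k)) = real_mat n A"
    using p by (intro real_mat_cong) simp
  moreover have "eigenvalue (real_mat n A) \<mu> \<Longrightarrow> eigenvalue (real_mat n (\<lambda>k l. A k l * p l / p k)) \<mu>"
    for \<mu> by (rule eigenvalue_real_mat_diagonal_scaling[of n p]) (use p in auto)
  moreover have "eigenvalue (real_mat n (\<lambda>k l. A k l * p l / p k)) \<mu> \<Longrightarrow>
      eigenvalue (real_mat n (\<lambda>k l. A k l * p l / p k * (1 / p l) / (1 / p k))) \<mu>"
    for \<mu> by (rule eigenvalue_real_mat_diagonal_scaling[of n "\<lambda>k. 1 / p k"]) (use p in auto)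
  ultimately show ?thesis unfolding spectrum_def by auto
qed

lemma sum_mono_eq_iff:
  fixes f g :: "'a \<Rightarrow> 'b::ordered_ab_group_add"
  assumes "finite A" and "\<And>x. x \<in> A \<Longrightarrow> f x \<le> g x"
  shows "sum f A = sum g A \<longleftrightarrow> (\<forall>x\<in>A. f x = g x)"
proof -
  have "sum f A = sum g A \<longleftrightarrow> (\<Sum>x\<in>A. g x - f x) = 0" by (auto simp: sum_subtractf)
  also have "\<dots> \<longleftrightarrow> (\<forall>x\<in>A. g x - f x = 0)"
    using assms by (intro sum_nonneg_eq_0_iff) auto
  finally show ?thesis by auto
qed

section \<open>The Collatz--Wielandt bound\<close>

locale positive_offdiagonal =
  fixes n :: nat and B :: "nat \<Rightarrow> nat \<Rightarrow> real"
  assumes nonneg: "k < n \<Longrightarrow> l < n \<Longrightarrow> 0 \<le> B k l"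
    and offdiagonal_pos: "k < n \<Longrightarrow> l < n \<Longrightarrow> k \<noteq> l \<Longrightarrow> 0 < B k l"
begin

lemma eigenvector_norm_row_le:
  assumes "eigenvector (real_mat n B) v \<mu>" and "k < n"
  shows "cmod \<mu> * cmod (v $ k) \<le> (\<Sum>l<n. B k l * cmod (v $ l))"
proof -
  have "cmod \<mu> * cmod (v $ k) = cmod (\<Sum>l<n. complex_of_real (B k l) * v $ l)"
    by (simp add: eigenvector_real_mat_nth[OF assms] norm_mult)
  also have "\<dots> \<le> (\<Sum>l<n. cmod (complex_of_real (B k l) * v $ l))" by (rule norm_sum)
  also have "\<dots> = (\<Sum>l<n. B k l * cmod (v $ l))"
    using nonneg[OF assms(2)] by (intro sum.cong) (auto simp: norm_mult)
  finally show ?thesis .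
qed

lemma eigenvector_norm_le_bound:
  assumes evv: "eigenvector (real_mat n B) v \<mu>"
    and bound: "\<And>l. l < n \<Longrightarrow> cmod (v $ l) \<le> m * w l" and "k < n"
  shows "cmod \<mu> * cmod (v $ k) \<le> m * (\<Sum>l<n. B k l * w l)"
proof -
  have "(\<Sum>l<n. B k l * cmod (v $ l)) \<le> (\<Sum>l<n. B k l * (m * w l))"
    using nonneg[OF \<open>k < n\<close>] bound by (intro sum_mono mult_left_mono) auto
  thus ?thesis using eigenvector_norm_row_le[OF evv \<open>k < n\<close>]
    by (simp add: sum_distrib_left algebra_simps)
qed

text \<open>Equality in one row propagates to every coordinate because all off-diagonal entries
  are positive.\<close>
lemma eigenvector_norm_eq_bound:
  assumes evv: "eigenvector (real_mat n B) v \<mu>"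
    and w: "\<And>l. l < n \<Longrightarrow> 0 < w l"
    and bound: "\<And>l. l < n \<Longrightarrow> cmod (v $ l) \<le> m * w l"
    and sub: "\<And>k. k < n \<Longrightarrow> (\<Sum>l<n. B k l * w l) \<le> c * w k"
    and k0: "k0 < n" "cmod (v $ k0) = m * w k0" and "0 \<le> m" and eq: "cmod \<mu> = c"
    and "l < n"
  shows "cmod (v $ l) = m * w l"
proof (cases "l = k0")
  case False
  have terms: "B k0 j * cmod (v $ j) \<le> B k0 j * (m * w j)" if "j \<in> {..<n}" for j
    using nonneg[OF k0(1)] bound that by (simp add: mult_left_mono)
  have "(\<Sum>j<n. B k0 j * (m * w j)) = m * (\<Sum>j<n. B k0 j * w j)"
    by (simp add: sum_distrib_left algebra_simps)
  also have "\<dots> \<le> m * (c * w k0)" using sub[OF k0(1)] \<open>0 \<le> m\<close> by (rule mult_left_mono)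
  also have "\<dots> = cmod \<mu> * cmod (v $ k0)" using eq k0(2) by simp
  also have "\<dots> \<le> (\<Sum>j<n. B k0 j * cmod (v $ j))" by (rule eigenvector_norm_row_le[OF evv k0(1)])
  moreover have "(\<Sum>j<n. B k0 j * cmod (v $ j)) \<le> (\<Sum>j<n. B k0 j * (m * w j))"
    using terms by (rule sum_mono)
  ultimately have "(\<Sum>j<n. B k0 j * cmod (v $ j)) = (\<Sum>j<n. B k0 j * (m * w j))"
    by linarith
  hence "B k0 l * cmod (v $ l) = B k0 l * (m * w l)"
    using sum_mono_eq_iff[of "{..<n}" "\<lambda>j. B k0 j * cmod (v $ j)" "\<lambda>j. B k0 j * (m * w j)"]
      terms \<open>l < n\<close> by simp
  thus ?thesis using offdiagonal_pos[OF k0(1) \<open>l < n\<close>] False by simp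
qed (use k0 in simp)

lemma eigenvalue_norm_le_subinvariant:
  assumes w: "\<And>k. k < n \<Longrightarrow> 0 < w k"
    and sub: "\<And>k. k < n \<Longrightarrow> (\<Sum>l<n. B k l * w l) \<le> c * w k"
    and ev: "eigenvalue (real_mat n B) \<mu>"
  shows "cmod \<mu> \<le> c \<and> (cmod \<mu> = c \<longrightarrow> (\<forall>k<n. (\<Sum>l<n. B k l * w l) = c * w k))"
proof -
  from ev obtain v where evv: "eigenvector (real_mat n B) v \<mu>" unfolding eigenvalue_def by blast
  hence v: "v \<in> carrier_vec n" and "v \<noteq> 0\<^sub>v n" unfolding eigenvector_def real_mat_def by auto
  then obtain l0 where l0: "l0 < n" "v $ l0 \<noteq> 0" by (metis eq_vecI carrier_vecD index_zero_vec(1,2))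
  define m where "m = Max ((\<lambda>l. cmod (v $ l) / w l) ` {..<n})"
  have bound: "cmod (v $ l) \<le> m * w l" if "l < n" for l
  proof -
    have "cmod (v $ l) / w l \<le> m" unfolding m_def using that by simp
    thus ?thesis using w[OF that] by (simp add: pos_divide_le_eq)
  qed
  have "m \<in> (\<lambda>l. cmod (v $ l) / w l) ` {..<n}" unfolding m_def using l0 by (intro Max_in) auto
  then obtain k0 where k0: "k0 < n" "cmod (v $ k0) = m * w k0" using w by fastforce
  have "0 < cmod (v $ l0)" using l0(2) by simp
  hence "0 < m * w l0" using bound[OF l0(1)] by linarith
  hence m: "0 < m" using w[OF l0(1)] by (simp add: zero_less_mult_iff)
  have "cmod \<mu> * (m * w k0) \<le> m * (c * w k0)"
    using eigenvector_norm_le_bound[OF evv bound k0(1)] mult_left_mono[OF sub[OF k0(1)], of m] m k0(2)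
    by simp
  hence le: "cmod \<mu> \<le> c" using m w[OF k0(1)] by (simp add: algebra_simps)
  moreover have "(\<Sum>l<n. B k l * w l) = c * w k" if eq: "cmod \<mu> = c" and k: "k < n" for k
  proof -
    have "cmod (v $ k) = m * w k"
      by (rule eigenvector_norm_eq_bound[OF evv, where w = w and c = c])
        (use w bound sub k0 m eq k in auto)
    hence "m * (c * w k) = cmod \<mu> * cmod (v $ k)" using eq by simp
    also have "\<dots> \<le> m * (\<Sum>l<n. B k l * w l)"
      using eigenvector_norm_le_bound[OF evv bound k] .
    finally have "c * w k \<le> (\<Sum>l<n. B k l * w l)" using m by simp
    thus ?thesis using sub[OF k] by linarith
  qed
  ultimately show ?thesis by blast
qed

lemma spectral_radius_subinvariant:
  assumes "0 < n" and w: "\<And>k. k < n \<Longrightarrow> 0 < w k"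
    and sub: "\<And>k. k < n \<Longrightarrow> (\<Sum>l<n. B k l * w l) \<le> c * w k"
  shows "spectral_radius (real_mat n B) \<le> c"
    and "spectral_radius (real_mat n B) = c \<longleftrightarrow> (\<forall>k<n. (\<Sum>l<n. B k l * w l) = c * w k)"
proof -
  obtain \<mu> where \<mu>: "eigenvalue (real_mat n B) \<mu>" "spectral_radius (real_mat n B) = cmod \<mu>"
    using spectral_radius_mem_max(1)[OF real_mat_carrier assms(1)] unfolding spectrum_def by auto
  note bound = eigenvalue_norm_le_subinvariant[OF w sub \<mu>(1)]
  show le: "spectral_radius (real_mat n B) \<le> c" using bound \<mu>(2) by simp
  have "c \<le> spectral_radius (real_mat n B)" if "\<forall>k<n. (\<Sum>l<n. B k l * w l) = c * w k"
  proof -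
    have "eigenvalue (real_mat n B) (complex_of_real c)"
      using that w[THEN less_imp_neq] by (intro eigenvalue_real_mat_of_eigen_rows[OF assms(1)]) auto
    hence "cmod (complex_of_real c) \<le> spectral_radius (real_mat n B)"
      using spectral_radius_mem_max(2)[OF real_mat_carrier assms(1)] unfolding spectrum_def by blast
    thus ?thesis by simp
  qed
  thus "spectral_radius (real_mat n B) = c \<longleftrightarrow> (\<forall>k<n. (\<Sum>l<n. B k l * w l) = c * w k)"
    using le bound \<mu>(2) by auto
qed

end

section \<open>A row-sum bound for matrices with positive off-diagonal part\<close>

lemma larger_root_gt_and_product:
  fixes a b c :: real
  assumes "0 < c"
  defines "\<beta> \<equiv> (a + b + sqrt ((a - b)\<^sup>2 + 4 * c)) / 2"
  shows "a < \<beta>" and "b < \<beta>" and "(\<beta> - a) * (\<beta> - b) = c"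
proof -
  define q where "q = sqrt ((a - b)\<^sup>2 + 4 * c)"
  have q2: "q\<^sup>2 = (a - b)\<^sup>2 + 4 * c" unfolding q_def using assms(1) by simp
  have "sqrt ((a - b)\<^sup>2) < q" unfolding q_def using assms(1) by (intro real_sqrt_less_mono) simp
  hence "a - b < q" and "b - a < q" by simp_all
  thus "a < \<beta>" and "b < \<beta>" unfolding \<beta>_def q_def[symmetric] by simp_all
  show "(\<beta> - a) * (\<beta> - b) = c"
    unfolding \<beta>_def q_def[symmetric] using q2 by (simp add: field_simps power2_eq_square)
qed

locale sorted_row_sums = positive_offdiagonal +
  fixes r :: "nat \<Rightarrow> real" and M N :: real and i :: nat
  assumes two_le_n: "2 \<le> n"
    and row_sum: "k < n \<Longrightarrow> (\<Sum>l<n. B k l) = r k"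
    and sorted: "k \<le> l \<Longrightarrow> l < n \<Longrightarrow> r l \<le> r k"
    and diagonal_le: "k < n \<Longrightarrow> B k k \<le> M"
    and diagonal_attains: "\<exists>j<n. B j j = M"
    and offdiagonal_le: "k < n \<Longrightarrow> l < n \<Longrightarrow> k \<noteq> l \<Longrightarrow> B k l \<le> N"
    and i_less: "i < n"
begin

abbreviation \<rho> :: real where "\<rho> \<equiv> spectral_radius (real_mat n B)"

definition excess :: real where
  "excess = (\<Sum>k<i. r k - r i)"

definition bound :: real where
  "bound = (r i + M - N + sqrt ((r i - M + N)\<^sup>2 + 4 * N * excess)) / 2"

text \<open>Conditions (i)--(iii) of the equality case with rows indexed from 0: the paper's t is t + 1
  here.\<close>
definition extremal_prefix :: "nat \<Rightarrow> bool" where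
  "extremal_prefix t \<longleftrightarrow> (\<forall>k<t. B k k = M) \<and> (\<forall>k<n. \<forall>l<t. k \<noteq> l \<longrightarrow> B k l = N)
     \<and> (\<forall>k. t \<le> k \<and> k < n \<longrightarrow> r k = r t)"

lemma N_pos: "0 < N"
  using offdiagonal_pos[of 0 1] offdiagonal_le[of 0 1] two_le_n by simp

lemma diagonal_le_row_sum:
  assumes "k < n" shows "B k k \<le> r k"
proof -
  have "B k k \<le> (\<Sum>l<n. B k l)" using assms nonneg[OF assms] by (intro member_le_sum) auto
  thus ?thesis using row_sum[OF assms] by simp
qed

lemma r_ge_r_i: "k \<le> i \<Longrightarrow> r i \<le> r k"
  using sorted i_less by blast

lemma excess_nonneg: "0 \<le> excess"
  unfolding excess_def using r_ge_r_i by (intro sum_nonneg) simp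

lemma excess_eq_0_iff: "excess = 0 \<longleftrightarrow> (\<forall>k<i. r k = r i)"
  unfolding excess_def using r_ge_r_i by (subst sum_nonneg_eq_0_iff) auto

lemma spectral_radius_le_max_row_sum:
  shows "\<rho> \<le> r 0" and "\<rho> = r 0 \<longleftrightarrow> (\<forall>k<n. r k = r 0)"
  using spectral_radius_subinvariant[of "\<lambda>_. 1" "r 0"] two_le_n row_sum sorted[of 0] by auto

lemma flat_case:
  assumes "excess = 0"
  shows "\<rho> \<le> bound \<and> (\<rho> = bound \<longleftrightarrow> (\<forall>k<n. r k = r 0) \<or> (\<exists>t. 1 \<le> t \<and> t \<le> i \<and> extremal_prefix t))"
proof -
  have flat: "k < i \<Longrightarrow> r k = r i" for k using assms excess_eq_0_iff by blast
  hence r0: "r 0 = r i" by (cases "i = 0") auto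
  have bound_max: "bound = max (r i) (M - N)"
    unfolding bound_def assms by (simp add: max_def)
  have prefix_flat: "\<forall>k<n. r k = r 0" if "t \<le> i" and "extremal_prefix t" for t
  proof -
    have tail: "t \<le> k \<Longrightarrow> k < n \<Longrightarrow> r k = r t" for k
      using that(2) unfolding extremal_prefix_def by blast
    have "r t = r i" using tail[OF that(1) i_less] by simp
    thus ?thesis using tail flat that(1) r0 by (metis le_less_trans not_le)
  qed
  have "\<rho> = bound \<longleftrightarrow> (\<forall>k<n. r k = r 0)"
  proof
    assume "\<rho> = bound"
    thus "\<forall>k<n. r k = r 0" using spectral_radius_le_max_row_sum r0 bound_max by force
  next
    assume all: "\<forall>k<n. r k = r 0"
    obtain j where "j < n" "B j j = M" using diagonal_attains by blast
    hence "M - N < r i" using diagonal_le_row_sum[of j] all r0 N_pos by force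
    thus "\<rho> = bound" using all spectral_radius_le_max_row_sum r0 bound_max by simp
  qed
  thus ?thesis using spectral_radius_le_max_row_sum prefix_flat r0 bound_max by auto
qed

lemma tight_rows_of_extremal_prefix:
  assumes "t \<le> i" and "extremal_prefix t"
  shows "(\<forall>k. i \<le> k \<and> k < n \<longrightarrow> r k = r i)
       \<and> (\<forall>l<n. r i < r l \<longrightarrow> (\<forall>k<n. B k l = (if k = l then M else N)))"
proof -
  from assms(2) have diag: "\<And>k. k < t \<Longrightarrow> B k k = M"
    and off: "\<And>k l. k < n \<Longrightarrow> l < t \<Longrightarrow> k \<noteq> l \<Longrightarrow> B k l = N"
    and tail: "\<And>k. t \<le> k \<Longrightarrow> k < n \<Longrightarrow> r k = r t"
    unfolding extremal_prefix_def by blast+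
  have r_i: "r i = r t" using tail[OF assms(1) i_less] .
  have before_t: "l < t" if "l < n" "r i < r l" for l
  proof (rule ccontr)
    assume "\<not> l < t"
    hence "r l = r t" using tail[of l] that(1) by simp
    thus False using r_i that(2) by simp
  qed
  show ?thesis
  proof (intro conjI allI impI)
    fix k assume "i \<le> k \<and> k < n"
    thus "r k = r i" using tail[of k] assms(1) r_i by simp
  next
    fix l k assume "l < n" "r i < r l" "k < n"
    thus "B k l = (if k = l then M else N)" using before_t diag off by simp
  qed
qed

text \<open>1 + lift is the test vector for the Collatz--Wielandt bound.\<close>
definition lift :: "nat \<Rightarrow> real" where
  "lift l = (if l < i then (r l - r i) / (bound - (M - N)) else 0)"

context
  assumes steep: "0 < excess"
begin

lemma bound_larger_root:
  shows "r i < bound" and "M - N < bound" and "(bound - r i) * (bound - (M - N)) = N * excess"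
proof -
  have "0 < N * excess" using N_pos steep by simp
  moreover have "(r i + (M - N) + sqrt ((r i - (M - N))\<^sup>2 + 4 * (N * excess))) / 2 = bound"
    unfolding bound_def by (simp add: algebra_simps)
  ultimately show "r i < bound" and "M - N < bound"
    and "(bound - r i) * (bound - (M - N)) = N * excess"
    using larger_root_gt_and_product[where a = "r i" and b = "M - N" and c = "N * excess"]
    by simp_all
qed

lemma lift_nonneg: "0 \<le> lift l"
  unfolding lift_def using r_ge_r_i bound_larger_root(2) by simp

lemma lift_pos_iff: "l < n \<Longrightarrow> 0 < lift l \<longleftrightarrow> r i < r l"
  unfolding lift_def using r_ge_r_i bound_larger_root(2) sorted[of i l]
  by (auto simp: zero_less_divide_iff)

lemma sum_lift: "(\<Sum>l<n. lift l) = excess / (bound - (M - N))"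
proof -
  have "(\<Sum>l<n. lift l) = (\<Sum>l<i. lift l)"
    using i_less by (intro sum.mono_neutral_right) (auto simp: lift_def)
  thus ?thesis unfolding excess_def lift_def by (simp add: sum_divide_distrib)
qed

lemma row_excess_le_lift:
  assumes "k < n"
  shows "r k - r i \<le> (bound - (M - N)) * lift k"
    and "r k - r i = (bound - (M - N)) * lift k \<longleftrightarrow> (i \<le> k \<longrightarrow> r k = r i)"
  using bound_larger_root(2) sorted[of i k] assms unfolding lift_def by auto

lemma sum_capped_lift:
  assumes "k < n"
  shows "(\<Sum>l<n. (if k = l then M else N) * lift l)
       = bound * (1 + lift k) - r i - (bound - (M - N)) * lift k"
proof -
  have "(\<Sum>l<n. (if k = l then M else N) * lift l)
      = (\<Sum>l<n. N * lift l + (if k = l then (M - N) * lift l else 0))"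
    by (intro sum.cong) (auto simp: algebra_simps)
  also have "\<dots> = N * (\<Sum>l<n. lift l) + (M - N) * lift k"
    using assms by (simp add: sum.distrib sum_distrib_left)
  also have "N * (\<Sum>l<n. lift l) = bound - r i"
    using bound_larger_root(2,3) unfolding sum_lift by (simp add: field_simps)
  finally show ?thesis by (simp add: algebra_simps)
qed

lemma capped_term_le:
  assumes "k < n" and "l < n"
  shows "B k l * lift l \<le> (if k = l then M else N) * lift l"
  using assms diagonal_le offdiagonal_le lift_nonneg by (auto intro: mult_right_mono)

lemma capped_term_eq_iff:
  assumes "l < n"
  shows "B k l * lift l = (if k = l then M else N) * lift l
     \<longleftrightarrow> (r i < r l \<longrightarrow> B k l = (if k = l then M else N))"
  using lift_pos_iff[OF assms] lift_nonneg[of l] by (cases "lift l = 0") auto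

lemma weighted_row_sum_le:
  assumes k: "k < n"
  shows "(\<Sum>l<n. B k l * (1 + lift l)) \<le> bound * (1 + lift k)"
    and "(\<Sum>l<n. B k l * (1 + lift l)) = bound * (1 + lift k)
      \<longleftrightarrow> (i \<le> k \<longrightarrow> r k = r i) \<and> (\<forall>l<n. r i < r l \<longrightarrow> B k l = (if k = l then M else N))"
proof -
  let ?cap = "\<lambda>l. (if k = l then M else N) * lift l"
  have split: "(\<Sum>l<n. B k l * (1 + lift l)) = r k + (\<Sum>l<n. B k l * lift l)"
    using row_sum[OF k] by (simp add: algebra_simps sum.distrib)
  have target: "bound * (1 + lift k) = (r i + (bound - (M - N)) * lift k) + (\<Sum>l<n. ?cap l)"
    using sum_capped_lift[OF k] by simp
  have row: "r k \<le> r i + (bound - (M - N)) * lift k"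
    using row_excess_le_lift(1)[OF k] by simp
  have caps: "(\<Sum>l<n. B k l * lift l) \<le> (\<Sum>l<n. ?cap l)"
    using capped_term_le k by (intro sum_mono) auto
  show "(\<Sum>l<n. B k l * (1 + lift l)) \<le> bound * (1 + lift k)"
    using split target row caps by linarith
  have "(\<Sum>l<n. B k l * (1 + lift l)) = bound * (1 + lift k)
      \<longleftrightarrow> r k = r i + (bound - (M - N)) * lift k \<and> (\<Sum>l<n. B k l * lift l) = (\<Sum>l<n. ?cap l)"
    using split target row caps by (intro iffI conjI) linarith+
  also have "\<dots> \<longleftrightarrow> (i \<le> k \<longrightarrow> r k = r i) \<and> (\<forall>l<n. r i < r l \<longrightarrow> B k l = (if k = l then M else N))"
    using row_excess_le_lift(2)[OF k] capped_term_eq_iff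
      sum_mono_eq_iff[of "{..<n}" "\<lambda>l. B k l * lift l" ?cap] capped_term_le[OF k]
    by auto
  finally show "(\<Sum>l<n. B k l * (1 + lift l)) = bound * (1 + lift k)
      \<longleftrightarrow> (i \<le> k \<longrightarrow> r k = r i) \<and> (\<forall>l<n. r i < r l \<longrightarrow> B k l = (if k = l then M else N))" .
qed

lemma extremal_prefix_Least:
  assumes tail: "\<And>k. i \<le> k \<Longrightarrow> k < n \<Longrightarrow> r k = r i"
    and capped: "\<And>l k. l < n \<Longrightarrow> r i < r l \<Longrightarrow> k < n \<Longrightarrow> B k l = (if k = l then M else N)"
  defines "t \<equiv> LEAST l. r l = r i"
  shows "1 \<le> t" and "t \<le> i" and "extremal_prefix t"
proof -
  show t_le: "t \<le> i" unfolding t_def by (rule Least_le) simp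
  have r_t: "r t = r i" unfolding t_def by (rule LeastI[of _ i]) simp
  have before_t: "r i < r l" if "l < t" for l
    using not_less_Least[OF that[unfolded t_def]] r_ge_r_i[of l] that t_le by simp
  show "1 \<le> t"
  proof (rule ccontr)
    assume "\<not> 1 \<le> t"
    hence "t = 0" by simp
    hence "r 0 = r i" using r_t by simp
    hence "r k = r i" if "k < i" for k
      using r_ge_r_i[of k] sorted[of 0 k] that i_less by simp
    thus False using steep excess_eq_0_iff by simp
  qed
  show "extremal_prefix t"
    unfolding extremal_prefix_def
  proof (intro conjI allI impI)
    fix k assume k: "t \<le> k \<and> k < n"
    show "r k = r t"
    proof (cases "k \<le> i")
      case True thus ?thesis using r_ge_r_i[of k] sorted[of t k] k r_t by simp
    next
      case False thus ?thesis using tail[of k] k r_t by simp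
    qed
  next
    fix k assume "k < t"
    thus "B k k = M" using capped[of k k] before_t t_le i_less by simp
  next
    fix k l assume "k < n" "l < t" "k \<noteq> l"
    thus "B k l = N" using capped[of l k] before_t t_le i_less by simp
  qed
qed

lemma extremal_prefix_iff:
  "(\<exists>t. 1 \<le> t \<and> t \<le> i \<and> extremal_prefix t)
   \<longleftrightarrow> (\<forall>k. i \<le> k \<and> k < n \<longrightarrow> r k = r i)
       \<and> (\<forall>l<n. r i < r l \<longrightarrow> (\<forall>k<n. B k l = (if k = l then M else N)))"
  using tight_rows_of_extremal_prefix extremal_prefix_Least by blast

lemma steep_case:
  "\<rho> \<le> bound \<and> (\<rho> = bound \<longleftrightarrow> (\<forall>k<n. r k = r 0) \<or> (\<exists>t. 1 \<le> t \<and> t \<le> i \<and> extremal_prefix t))"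
proof -
  have n: "0 < n" using two_le_n by simp
  have w: "0 < 1 + lift l" for l using lift_nonneg[of l] by simp
  note radius = spectral_radius_subinvariant[where w = "\<lambda>l. 1 + lift l" and c = bound,
      OF n w weighted_row_sum_le(1)]
  have "\<not> (\<forall>k<n. r k = r 0)"
  proof
    assume all: "\<forall>k<n. r k = r 0"
    have "r k = r i" if "k < i" for k
      using all[rule_format, of k] all[rule_format, of i] that i_less by simp
    thus False using steep excess_eq_0_iff by simp
  qed
  moreover have "\<rho> = bound \<longleftrightarrow> (\<forall>k<n. (i \<le> k \<longrightarrow> r k = r i)
      \<and> (\<forall>l<n. r i < r l \<longrightarrow> B k l = (if k = l then M else N)))"
    using weighted_row_sum_le(2) by (simp add: radius(2))
  moreover have "\<dots> \<longleftrightarrow> (\<exists>t. 1 \<le> t \<and> t \<le> i \<and> extremal_prefix t)"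
    unfolding extremal_prefix_iff by blast
  ultimately show ?thesis using radius(1) by blast
qed

end

theorem spectral_radius_le_bound:
  "\<rho> \<le> bound \<and> (\<rho> = bound \<longleftrightarrow> (\<forall>k<n. r k = r 0) \<or> (\<exists>t. 1 \<le> t \<and> t \<le> i \<and> extremal_prefix t))"
  using flat_case steep_case excess_nonneg by (cases "excess = 0") auto

end

section \<open>The distance signless Laplacian\<close>

lemma gdist_self: "u < n \<Longrightarrow> gdist n E u u = 0"
  unfolding gdist_def is_walk_def by (simp add: Least_eq_0 exI[of _ "\<lambda>_. u"])

lemma gdist_pos:
  assumes "connected_graph n E" and "u < n" and "v < n" and "u \<noteq> v"
  shows "0 < gdist n E u v"
proof -
  from assms obtain k where "is_walk E n u v k" unfolding connected_graph_def by blast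
  hence "is_walk E n u v (LEAST k. is_walk E n u v k)" by (rule LeastI)
  moreover have "\<not> is_walk E n u v 0" using assms(4) unfolding is_walk_def by auto
  ultimately have "(LEAST k. is_walk E n u v k) \<noteq> 0" by metis
  thus ?thesis unfolding gdist_def by simp
qed

lemma transmission_pos:
  assumes "connected_graph n E" and "2 \<le> n" and "u < n"
  shows "0 < transmission n E u"
proof -
  define v :: nat where "v = (if u = 0 then 1 else 0)"
  have v: "v < n" "v \<noteq> u" unfolding v_def using assms(2,3) by auto
  have "gdist n E u v \<le> (\<Sum>j<n. gdist n E u j)"
    using v by (intro member_le_sum) (auto simp: gdist_def)
  thus ?thesis using gdist_pos[OF assms(1,3) v(1)] v(2) unfolding transmission_def by simp
qed

text \<open>The similar matrix P^-1 DQ(G) P with P = diag(D_k^\<alpha>); its row sums are the s_k.\<close>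
definition scaled_DQ :: "nat \<Rightarrow> (nat \<Rightarrow> nat \<Rightarrow> bool) \<Rightarrow> real \<Rightarrow> nat \<Rightarrow> nat \<Rightarrow> real" where
  "scaled_DQ n E \<alpha> k l = ((if k = l then transmission n E k else 0) + gdist n E k l)
     * transmission n E l powr \<alpha> / transmission n E k powr \<alpha>"

lemma scaled_DQ_offdiagonal:
  "k \<noteq> l \<Longrightarrow> scaled_DQ n E \<alpha> k l
     = gdist n E k l * transmission n E l powr \<alpha> / transmission n E k powr \<alpha>"
  unfolding scaled_DQ_def by simp

context
  fixes n E
  assumes conn: "connected_graph n E" and two_le_n: "2 \<le> n"
begin

lemma transmission_nonzero: "u < n \<Longrightarrow> transmission n E u \<noteq> 0"
  using transmission_pos[OF conn two_le_n] by fastforce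

lemma scaled_DQ_diagonal: "k < n \<Longrightarrow> scaled_DQ n E \<alpha> k k = transmission n E k"
  unfolding scaled_DQ_def using gdist_self transmission_pos[OF conn two_le_n] by simp

lemma scaled_DQ_row_sum:
  assumes "k < n"
  shows "(\<Sum>l<n. scaled_DQ n E \<alpha> k l) = gen_avg_trans n E \<alpha> k + transmission n E k"
proof -
  have "(\<Sum>l<n. scaled_DQ n E \<alpha> k l) = (\<Sum>l<n. (if k = l then transmission n E k else 0)
      + gdist n E k l * transmission n E l powr \<alpha> / transmission n E k powr \<alpha>)"
    using transmission_pos[OF conn two_le_n assms]
    by (intro sum.cong) (auto simp: scaled_DQ_def field_simps)
  thus ?thesis
    using assms by (simp add: sum.distrib gen_avg_trans_def sum_divide_distrib)
qed

lemma scaled_DQ_offdiagonal_pos: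
  assumes "k < n" and "l < n" and "k \<noteq> l"
  shows "0 < scaled_DQ n E \<alpha> k l"
proof -
  have "0 < transmission n E l powr \<alpha>" and "0 < transmission n E k powr \<alpha>"
    using transmission_nonzero assms by simp_all
  thus ?thesis using scaled_DQ_offdiagonal[OF assms(3)] gdist_pos[OF conn assms] by simp
qed

lemma positive_offdiagonal_scaled_DQ: "positive_offdiagonal n (scaled_DQ n E \<alpha>)"
proof
  fix k l assume "k < n" and "l < n"
  thus "0 \<le> scaled_DQ n E \<alpha> k l"
    using scaled_DQ_diagonal scaled_DQ_offdiagonal_pos transmission_pos[OF conn two_le_n]
    by (cases "k = l") (auto intro: less_imp_le)
qed (fact scaled_DQ_offdiagonal_pos)

lemma spectral_radius_scaled_DQ:
  "spectral_radius (real_mat n (scaled_DQ n E \<alpha>)) = spectral_radius (DQ_mat n E)"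
proof -
  have "DQ_mat n E = real_mat n (\<lambda>k l. (if k = l then transmission n E k else 0) + gdist n E k l)"
    unfolding DQ_mat_def real_mat_def ..
  moreover have "scaled_DQ n E \<alpha> = (\<lambda>k l. ((if k = l then transmission n E k else 0)
      + gdist n E k l) * transmission n E l powr \<alpha> / transmission n E k powr \<alpha>)"
    unfolding scaled_DQ_def by (intro ext) simp
  ultimately have "spectrum (real_mat n (scaled_DQ n E \<alpha>)) = spectrum (DQ_mat n E)"
    using transmission_nonzero by (simp only:) (rule spectrum_real_mat_diagonal_scaling, simp)
  thus ?thesis unfolding spectral_radius_def by simp
qed

end

lemma sorted_row_sums_scaled_DQ:
  assumes conn: "connected_graph n E"
    and n2: "n \<ge> 2"
    and s_def: "\<And>k. s k = gen_avg_trans n E \<alpha> k + transmission n E k"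
    and sorted: "\<And>k l. k \<le> l \<Longrightarrow> l < n \<Longrightarrow> s l \<le> s k"
    and M_def: "M = Max {transmission n E j | j. j < n}"
    and N_def: "N = Max {gdist n E a b * transmission n E b powr \<alpha> / transmission n E a powr \<alpha>
                        | a b. a < n \<and> b < n \<and> a \<noteq> b}"
    and i_lt: "i < n"
  shows "sorted_row_sums n (scaled_DQ n E \<alpha>) s M N i"
proof -
  have fin_M: "finite {transmission n E j | j. j < n}" by simp
  have fin_N: "finite {gdist n E a b * transmission n E b powr \<alpha> / transmission n E a powr \<alpha>
                        | a b. a < n \<and> b < n \<and> a \<noteq> b}"
    by (rule finite_subset[of _ "(\<lambda>(a, b). gdist n E a b * transmission n E b powr \<alpha>
        / transmission n E a powr \<alpha>) ` ({..<n} \<times> {..<n})"]) auto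
  show ?thesis
  proof (intro sorted_row_sums.intro positive_offdiagonal_scaled_DQ[OF conn n2]
      sorted_row_sums_axioms.intro)
    fix k assume k: "k < n"
    show "(\<Sum>l<n. scaled_DQ n E \<alpha> k l) = s k" using scaled_DQ_row_sum[OF conn n2 k] s_def by simp
    show "scaled_DQ n E \<alpha> k k \<le> M"
      unfolding scaled_DQ_diagonal[OF conn n2 k] M_def using fin_M k by (intro Max_ge) auto
  next
    fix k l assume "k < n" "l < n" "k \<noteq> l"
    thus "scaled_DQ n E \<alpha> k l \<le> N"
      unfolding scaled_DQ_offdiagonal[OF \<open>k \<noteq> l\<close>] N_def using fin_N by (intro Max_ge) auto
  next
    have "M \<in> {transmission n E j | j. j < n}"
      unfolding M_def using fin_M n2 by (intro Max_in) (auto intro!: exI[of _ 0])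
    thus "\<exists>j<n. scaled_DQ n E \<alpha> j j = M" using scaled_DQ_diagonal[OF conn n2] by auto
  qed (use n2 sorted i_lt in auto)
qed

theorem theorem7:
  fixes n :: nat and E :: "nat \<Rightarrow> nat \<Rightarrow> bool" and \<alpha> :: real
    and s :: "nat \<Rightarrow> real" and M N :: real and i :: nat
  assumes conn: "connected_graph n E"
    and n2: "n \<ge> 2"
    and s_def: "\<And>k. s k = gen_avg_trans n E \<alpha> k + transmission n E k"
    and sorted: "\<And>k l. k \<le> l \<Longrightarrow> l < n \<Longrightarrow> s l \<le> s k"
    and M_def: "M = Max {transmission n E j | j. j < n}"
    and N_def: "N = Max {gdist n E a b * transmission n E b powr \<alpha> / transmission n E a powr \<alpha>
                        | a b. a < n \<and> b < n \<and> a \<noteq> b}"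
    and i_lt: "i < n"
  shows "(spectral_radius (DQ_mat n E)
           \<le> (s i + M - N + sqrt ((s i - M + N)\<^sup>2 + 4 * N * (\<Sum>k<i. s k - s i))) / 2)
         \<and> (spectral_radius (DQ_mat n E)
           = (s i + M - N + sqrt ((s i - M + N)\<^sup>2 + 4 * N * (\<Sum>k<i. s k - s i))) / 2
         \<longleftrightarrow> (\<forall>k<n. s k = s 0) \<or>
             (\<exists>t. 1 \<le> t \<and> t \<le> i \<and>
                  (\<forall>k<t. transmission n E k = M) \<and>
                  (\<forall>k<n. \<forall>l<t. k \<noteq> l \<longrightarrow>
                      gdist n E k l * transmission n E l powr \<alpha> / transmission n E k powr \<alpha> = N) \<and>
                  (\<forall>k. t \<le> k \<and> k < n \<longrightarrow> s k = s t)))"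
proof -
  interpret sorted_row_sums n "scaled_DQ n E \<alpha>" s M N i
    by (rule sorted_row_sums_scaled_DQ[OF assms])
  have prefix: "1 \<le> t \<and> t \<le> i \<and> extremal_prefix t \<longleftrightarrow> 1 \<le> t \<and> t \<le> i \<and>
      (\<forall>k<t. transmission n E k = M) \<and>
      (\<forall>k<n. \<forall>l<t. k \<noteq> l \<longrightarrow>
         gdist n E k l * transmission n E l powr \<alpha> / transmission n E k powr \<alpha> = N) \<and>
      (\<forall>k. t \<le> k \<and> k < n \<longrightarrow> s k = s t)" for t
    unfolding extremal_prefix_def using i_lt
    by (auto simp: scaled_DQ_diagonal[OF conn n2] scaled_DQ_offdiagonal)
  show ?thesis
    using spectral_radius_le_bound
    unfolding prefix spectral_radius_scaled_DQ[OF conn n2] bound_def excess_def .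
qed

end
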